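(* Let $\Lambda^\ast=(\lambda^\ast_{ij})\in\mathbb{R}_+^{n\times m}$ be the true intensity matrix and let $\widehat\Lambda=(\widehat\lambda_{ij})\in\mathbb{R}_+^{n\times m}$ be any intensity matrix estimator satisfying $c_1\bar\lambda_{m,n}\le\widehat\lambda_{ij}\le C_1\bar\lambda_{m,n}$ for all $(i,j)$, where $0<c_1\le C_1<\infty$ and $C_1\bar\lambda_{m,n}\le 1/2$. Define the conditional generation error $$\Delta_{(\boldsymbol\Theta_n,\mathcal{A}_n)}:=\sum_{i=1}^n\sum_{j=1}^m \mathrm{d}_{\mathrm{KL}}\Big(\mathrm{Bern}\big(1-e^{-\lambda^\ast_{ij}}\big)\,\Big\|\,\mathrm{Bern}\big(1-e^{-\widehat\lambda_{ij}}\big)\Big).$$ Then there is a constant $C>0$ depending only on $c_1$ (and $C_1$) such that $$\frac{\Delta_{(\boldsymbol\Theta_n,\mathcal{A}_n)}}{nm}\le C\,\frac{\|\widehat\Lambda-\Lambda^\ast\|_F^2}{nm\,\bar\lambda_{m,n}}.$$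
   Context: $\bar\lambda_{m,n}>0$ is a scale parameter. In the intensity-link hypergraph model, conditionally on latent factors the incidence entries are independent with $b_{ij}\sim\mathrm{Bern}(1-e^{-\lambda_{ij}})$; $\Delta_{(\boldsymbol\Theta_n,\mathcal{A}_n)}$ is the KL divergence between the conditional incidence law under the true intensities $\Lambda^\ast$ and under the estimated intensities $\widehat\Lambda$, which by independence is the sum of the entrywise Bernoulli KL divergences. $\|\cdot\|_F$ is the Frobenius norm. *)

theory Defs
  imports Complex_Main
begin

definition bern_kl :: "real \<Rightarrow> real \<Rightarrow> real" where
  "bern_kl p q =
     (if p = 0 then 0 else p * ln (p / q)) +
     (if p = 1 then 0 else (1 - p) * ln ((1 - p) / (1 - q)))"

definition gen_error :: "nat \<Rightarrow> nat \<Rightarrow> (nat \<Rightarrow> nat \<Rightarrow> real) \<Rightarrow> (nat \<Rightarrow> nat \<Rightarrow> real) \<Rightarrow> real" where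
  "gen_error n m Lstar Lhat =
     (\<Sum>i<n. \<Sum>j<m. bern_kl (1 - exp (- Lstar i j)) (1 - exp (- Lhat i j)))"

definition frob_dist_sq :: "nat \<Rightarrow> nat \<Rightarrow> (nat \<Rightarrow> nat \<Rightarrow> real) \<Rightarrow> (nat \<Rightarrow> nat \<Rightarrow> real) \<Rightarrow> real" where
  "frob_dist_sq n m A B = (\<Sum>i<n. \<Sum>j<m. (A i j - B i j)^2)"

end

theory Submission
  imports Defs
begin

text \<open>Each entry's KL divergence is bounded by the chi-square divergence
  \<open>(p - q)\<^sup>2 / (q (1 - q))\<close>. With \<open>p = 1 - e\<^sup>-\<^sup>a\<close> and \<open>q = 1 - e\<^sup>-\<^sup>b\<close>, the numerator is at most
  \<open>(a - b)\<^sup>2\<close> because \<open>t \<mapsto> e\<^sup>-\<^sup>t\<close> is 1-Lipschitz on \<open>[0, \<infinity>)\<close>, and the Bernoulli variance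
  \<open>q (1 - q)\<close> is at least \<open>b / 3\<close> as long as \<open>b \<le> 1/2\<close>. Since \<open>b \<ge> c\<^sub>1 \<lambda>\<close>, every entry
  contributes at most \<open>3 (a - b)\<^sup>2 / (c\<^sub>1 \<lambda>)\<close>, giving the theorem with \<open>C = 3 / c\<^sub>1\<close>.\<close>

lemma xlnx_div_le:
  fixes p q :: real
  assumes "0 \<le> p" "0 < q"
  shows "(if p = 0 then 0 else p * ln (p / q)) \<le> p * (p - q) / q"
proof (cases "p = 0")
  case False
  with assms have "ln (p / q) \<le> p / q - 1"
    by (intro ln_le_minus_one) simp
  with assms have "p * ln (p / q) \<le> p * (p / q - 1)"
    by (intro mult_left_mono) auto
  also have "\<dots> = p * (p - q) / q"
    using assms by (simp add: field_simps)
  finally show ?thesis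
    using False by simp
qed simp

lemma bern_kl_le_chi_square:
  fixes p q :: real
  assumes "0 \<le> p" "p \<le> 1" "0 < q" "q < 1"
  shows "bern_kl p q \<le> (p - q)\<^sup>2 / (q * (1 - q))"
proof -
  have "bern_kl p q \<le> p * (p - q) / q + (1 - p) * ((1 - p) - (1 - q)) / (1 - q)"
    unfolding bern_kl_def
    using xlnx_div_le[of p q] xlnx_div_le[of "1 - p" "1 - q"] assms
    by (intro add_mono) auto
  also have "\<dots> = (p - q)\<^sup>2 / (q * (1 - q))"
    using assms by (simp add: field_simps power2_eq_square)
  finally show ?thesis .
qed

lemma exp_minus_diff_le:
  fixes x y :: real
  assumes "0 \<le> x" "x \<le> y"
  shows "0 \<le> exp (- x) - exp (- y) \<and> exp (- x) - exp (- y) \<le> y - x"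
proof -
  have split: "exp (- x) - exp (- y) = exp (- x) * (1 - exp (- (y - x)))"
    by (simp add: algebra_simps flip: exp_add)
  have "1 - exp (- (y - x)) \<le> y - x"
    using exp_ge_add_one_self[of "- (y - x)"] by linarith
  moreover have "exp (- x) \<le> 1" "exp (- (y - x)) \<le> 1"
    using assms by simp_all
  ultimately have "exp (- x) * (1 - exp (- (y - x))) \<le> 1 * (y - x)"
    by (intro mult_mono) auto
  with \<open>exp (- (y - x)) \<le> 1\<close> show ?thesis
    unfolding split by simp
qed

lemma exp_minus_diff_sq_le:
  fixes a b :: real
  assumes "0 \<le> a" "0 \<le> b"
  shows "(exp (- a) - exp (- b))\<^sup>2 \<le> (a - b)\<^sup>2"
proof -
  have "\<bar>exp (- a) - exp (- b)\<bar> \<le> \<bar>a - b\<bar>"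
    using exp_minus_diff_le[of a b] exp_minus_diff_le[of b a] assms
    by (cases "a \<le> b") auto
  then show ?thesis
    by (metis abs_ge_zero power2_abs power_mono)
qed

lemma one_minus_exp_variance_ge:
  fixes b :: real
  assumes "0 < b" "b \<le> 1/2"
  shows "b / 3 \<le> (1 - exp (- b)) * exp (- b)"
proof -
  have "exp (- b) \<le> 1 / (1 + b)"
    using exp_ge_add_one_self[of b] assms by (simp add: exp_minus field_simps)
  then have "b / (1 + b) \<le> 1 - exp (- b)"
    using assms by (simp add: field_simps)
  moreover have "1 - b \<le> exp (- b)"
    using exp_ge_add_one_self[of "- b"] by simp
  ultimately have "b / (1 + b) * (1 - b) \<le> (1 - exp (- b)) * exp (- b)"
    using assms by (intro mult_mono) auto
  moreover have "b / 3 \<le> b / (1 + b) * (1 - b)"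
    using assms by (simp add: field_simps)
  ultimately show ?thesis
    by linarith
qed

lemma bern_kl_exp_link_le:
  fixes a b :: real
  assumes "0 \<le> a" "0 < b" "b \<le> 1/2"
  shows "bern_kl (1 - exp (- a)) (1 - exp (- b)) \<le> 3 * (b - a)\<^sup>2 / b"
proof -
  let ?q = "1 - exp (- b)"
  have "bern_kl (1 - exp (- a)) ?q \<le> (exp (- a) - exp (- b))\<^sup>2 / (?q * (1 - ?q))"
    using bern_kl_le_chi_square[of "1 - exp (- a)" ?q] assms
    by (simp add: power2_commute)
  also have "\<dots> \<le> (b - a)\<^sup>2 / (b / 3)"
    using exp_minus_diff_sq_le[of a b] one_minus_exp_variance_ge[of b] assms
    by (intro frac_le) (auto simp: power2_commute)
  also have "\<dots> = 3 * (b - a)\<^sup>2 / b"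
    by simp
  finally show ?thesis .
qed

lemma gen_error_le_frob_dist_sq:
  fixes lbar c1 :: real
  assumes "0 < c1" "0 < lbar"
    and "\<forall>i<n. \<forall>j<m. 0 \<le> Lstar i j"
    and "\<forall>i<n. \<forall>j<m. c1 * lbar \<le> Lhat i j \<and> Lhat i j \<le> 1/2"
  shows "gen_error n m Lstar Lhat \<le> 3 / c1 * (frob_dist_sq n m Lhat Lstar / lbar)"
proof -
  have "gen_error n m Lstar Lhat \<le> (\<Sum>i<n. \<Sum>j<m. 3 / c1 * ((Lhat i j - Lstar i j)\<^sup>2 / lbar))"
    unfolding gen_error_def
  proof (intro sum_mono)
    fix i j
    assume "i \<in> {..<n}" "j \<in> {..<m}"
    with assms have entry: "0 \<le> Lstar i j" "c1 * lbar \<le> Lhat i j" "Lhat i j \<le> 1/2"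
      by auto
    moreover have "0 < c1 * lbar"
      using assms by simp
    ultimately have "3 * (Lhat i j - Lstar i j)\<^sup>2 / Lhat i j
        \<le> 3 * (Lhat i j - Lstar i j)\<^sup>2 / (c1 * lbar)"
      by (intro divide_left_mono) auto
    with bern_kl_exp_link_le[of "Lstar i j" "Lhat i j"] entry \<open>0 < c1 * lbar\<close>
    show "bern_kl (1 - exp (- Lstar i j)) (1 - exp (- Lhat i j))
        \<le> 3 / c1 * ((Lhat i j - Lstar i j)\<^sup>2 / lbar)"
      by simp
  qed
  also have "\<dots> = 3 / c1 * (frob_dist_sq n m Lhat Lstar / lbar)"
    unfolding frob_dist_sq_def by (simp add: sum_distrib_left sum_divide_distrib)
  finally show ?thesis .
qed

theorem theorem4:
  fixes c1 C1 :: real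
  assumes "0 < c1" and "c1 \<le> C1"
  shows "\<exists>C>0. \<forall>(n::nat) (m::nat) (lbar::real) Lstar Lhat.
           0 < lbar \<longrightarrow> C1 * lbar \<le> 1/2 \<longrightarrow>
           (\<forall>i<n. \<forall>j<m. 0 \<le> Lstar i j) \<longrightarrow>
           (\<forall>i<n. \<forall>j<m. c1 * lbar \<le> Lhat i j \<and> Lhat i j \<le> C1 * lbar) \<longrightarrow>
           gen_error n m Lstar Lhat / (real n * real m)
             \<le> C * (frob_dist_sq n m Lhat Lstar / (real n * real m * lbar))"
proof (intro exI[of _ "3 / c1"] conjI allI impI)
  show "0 < 3 / c1"
    using assms by simp
  fix n m :: nat and lbar :: real and Lstar Lhat :: "nat \<Rightarrow> nat \<Rightarrow> real"
  assume "0 < lbar" "C1 * lbar \<le> 1/2"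
    and "\<forall>i<n. \<forall>j<m. 0 \<le> Lstar i j"
    and "\<forall>i<n. \<forall>j<m. c1 * lbar \<le> Lhat i j \<and> Lhat i j \<le> C1 * lbar"
  then have "gen_error n m Lstar Lhat \<le> 3 / c1 * (frob_dist_sq n m Lhat Lstar / lbar)"
    using assms(1) by (intro gen_error_le_frob_dist_sq) force+
  then have "gen_error n m Lstar Lhat / (real n * real m)
      \<le> 3 / c1 * (frob_dist_sq n m Lhat Lstar / lbar) / (real n * real m)"
    by (intro divide_right_mono) auto
  then show "gen_error n m Lstar Lhat / (real n * real m)
      \<le> 3 / c1 * (frob_dist_sq n m Lhat Lstar / (real n * real m * lbar))"
    by (simp add: field_simps)
qed

end
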